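(* Let $K,H$ be finite dimensional Hilbert spaces, $A\in B(K\otimes H)$ self-adjoint, and $y=\sum_{i=1}^k x_i\otimes y_i$ with $x_i\in K$, $y_i\in H$. Let $X=\mathrm{span}(x_1,\dots,x_k)$ and $Y=\mathrm{span}(y_1,\dots,y_k)$. Suppose $(Ay,y)=1$ and $Ay\notin X\otimes Y$. Then there exist a unit product vector $x=u\otimes v$ ($u\in K$, $v\in H$) with $x\perp X\otimes Y$ and $s\in(0,1)$ such that, with $t=(1-s^2)^{1/2}$, $$\big(A(sx+ty),\,sx+ty\big)>1.$$ *)

theory Defs
  imports "HOL-Analysis.Analysis"
begin

text \<open>Finite-dimensional complex Hilbert spaces K = C^'m, H = C^'n; K \<otimes> H = C^('m \<times> 'n).
  Operators on K \<otimes> H are matrices acting by (*v).\<close>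

definition cinner :: "complex^'i \<Rightarrow> complex^'i \<Rightarrow> complex" where
  "cinner z w = (\<Sum>i\<in>UNIV. z $ i * cnj (w $ i))"

definition tensor :: "complex^'m \<Rightarrow> complex^'n \<Rightarrow> complex^('m \<times> 'n)" where
  "tensor u v = (\<chi> p. u $ fst p * v $ snd p)"

definition self_adjoint :: "complex^'i^'i \<Rightarrow> bool" where
  "self_adjoint A \<longleftrightarrow> (\<forall>i j. A $ i $ j = cnj (A $ j $ i))"

definition tensor_subspace :: "(complex^'m) set \<Rightarrow> (complex^'n) set \<Rightarrow> (complex^('m \<times> 'n)) set" where
  "tensor_subspace X Y = vec.span {tensor a b | a b. a \<in> X \<and> b \<in> Y}"

end

theory Submission imports Defs begin

text \<open>Split \<open>Ay = p + z\<close> with \<open>p\<close> in \<open>P = X \<otimes> Y\<close> and \<open>z \<perp> P\<close>; \<open>z \<noteq> 0\<close> since \<open>Ay \<notin> P\<close>.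
  Every elementary tensor \<open>e\<^sub>i \<otimes> e\<^sub>j\<close> is a sum of four product vectors obtained by
  splitting \<open>e\<^sub>i\<close> along \<open>X\<close> and \<open>e\<^sub>j\<close> along \<open>Y\<close>; one lies in \<open>P\<close> and the other three are
  orthogonal to \<open>P\<close>. Hence some product vector \<open>x \<perp> P\<close> has \<open>(Ay, x) \<noteq> 0\<close>, and after
  rescaling, \<open>\<beta> = Re (Ay, x) > 0\<close> with \<open>\<parallel>x\<parallel> = 1\<close>. For \<open>w = sx + ty\<close> we get
  \<open>Re (Aw, w) - 1 = s (2t\<beta> - s (1 - Re (Ax, x)))\<close>, which is positive for small \<open>s > 0\<close>.\<close>

lemma scaleR_conv_vector_smult: "r *\<^sub>R x = complex_of_real r *s (x::complex^'i)"
  by (simp only: vec_eq_iff vector_scaleR_component vector_smult_component)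
    (simp add: scaleR_conv_of_real)

lemma cinner_add_left: "cinner (x + y) z = cinner x z + cinner y z"
  by (simp add: cinner_def sum.distrib distrib_right)

lemma cinner_add_right: "cinner z (x + y) = cinner z x + cinner z y"
  by (simp add: cinner_def sum.distrib distrib_left)

lemma cinner_scale_left: "cinner (c *s x) z = c * cinner x z"
  by (simp add: cinner_def sum_distrib_left mult.assoc)

lemma cinner_scale_right: "cinner z (c *s x) = cnj c * cinner z x"
  by (simp add: cinner_def sum_distrib_left mult.assoc mult.left_commute)

lemma cinner_zero_right [simp]: "cinner x 0 = 0"
  by (simp add: cinner_def)

lemma cinner_commute_cnj: "cinner x y = cnj (cinner y x)"
  by (simp add: cinner_def mult.commute)

lemma inner_eq_Re_cinner: "inner x y = Re (cinner x (y::complex^'i))"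
  by (simp add: inner_vec_def cinner_def inner_complex_def Re_sum)

lemma self_adjoint_cinner:
  assumes "self_adjoint A"
  shows "cinner (A *v x) y = cinner x (A *v y)"
proof -
  have A: "cnj (A$j$i) = A$i$j" for i j
    using assms unfolding self_adjoint_def by metis
  have "cinner (A *v x) y = (\<Sum>i\<in>UNIV. \<Sum>j\<in>UNIV. A$i$j * x$j * cnj (y$i))"
    by (simp add: cinner_def matrix_vector_mult_def sum_distrib_right)
  also have "\<dots> = (\<Sum>j\<in>UNIV. \<Sum>i\<in>UNIV. x$j * (cnj (A$j$i) * cnj (y$i)))"
    unfolding A by (subst sum.swap) (simp add: mult_ac)
  also have "\<dots> = cinner x (A *v y)"
    by (simp add: cinner_def matrix_vector_mult_def sum_distrib_left)
  finally show ?thesis .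
qed

lemma self_adjoint_Re_cinner_combination:
  assumes "self_adjoint A"
  shows "Re (cinner (A *v (s *\<^sub>R x + t *\<^sub>R y)) (s *\<^sub>R x + t *\<^sub>R y))
    = s\<^sup>2 * Re (cinner (A *v x) x) + t\<^sup>2 * Re (cinner (A *v y) y)
      + 2 * s * t * Re (cinner (A *v y) x)"
proof -
  have "Re (cinner (A *v x) y) = Re (cinner (A *v y) x)"
    using self_adjoint_cinner[OF assms, of x y] cinner_commute_cnj[of x "A *v y"] by simp
  then show ?thesis
    by (simp add: scaleR_conv_vector_smult matrix_vector_right_distrib vector_scalar_commute
        cinner_add_left cinner_add_right cinner_scale_left cinner_scale_right
        power2_eq_square algebra_simps)
qed

text \<open>The orthogonal decomposition of the real inner product space \<open>complex^'i\<close> is also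
  orthogonal for \<open>cinner\<close> once the subspace is closed under multiplication by \<open>\<i>\<close>.\<close>

lemma vec_subspace_imp_subspace:
  assumes "vec.subspace (S::(complex^'i) set)"
  shows "subspace S"
proof (rule subspaceI)
  show "0 \<in> S" using assms by (rule vec.subspace_0)
  show "x + y \<in> S" if "x \<in> S" "y \<in> S" for x y
    using assms that by (rule vec.subspace_add)
  show "c *\<^sub>R x \<in> S" if "x \<in> S" for c x
    unfolding scaleR_conv_vector_smult using assms that by (rule vec.subspace_scale)
qed

lemma vec_subspace_orthogonal_decomp:
  fixes S :: "(complex^'i) set"
  assumes "vec.subspace S"
  obtains p q where "p \<in> S" "\<forall>s\<in>S. cinner q s = 0" "w = p + q"
proof -
  have span_S: "span S = S"
    using vec_subspace_imp_subspace[OF assms] by (simp add: span_eq_iff)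
  obtain p q where p: "p \<in> span S" and q: "\<And>s. s \<in> span S \<Longrightarrow> orthogonal q s"
    and w: "p + q = w"
    using orthogonal_subspace_decomp_exists[of S w] by metis
  have "cinner q s = 0" if s: "s \<in> S" for s
  proof -
    have "\<i> *s s \<in> S" using assms s by (simp add: vec.subspace_scale)
    then have "Re (cinner q (\<i> *s s)) = 0"
      using q span_S by (simp add: orthogonal_def inner_eq_Re_cinner)
    then have "Im (cinner q s) = 0" by (simp add: cinner_scale_right)
    moreover have "Re (cinner q s) = 0"
      using q span_S s by (simp add: orthogonal_def inner_eq_Re_cinner)
    ultimately show ?thesis by (simp add: complex_eq_iff)
  qed
  then show ?thesis using that p span_S w by auto
qed

lemma cinner_orthogonal_span:
  assumes "\<forall>s\<in>S. cinner x s = 0"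
  shows "\<forall>s\<in>vec.span S. cinner x s = 0"
proof -
  have "vec.subspace {s. cinner x s = 0}"
    by (auto simp: vec.subspace_def cinner_add_right cinner_scale_right)
  then have "vec.span S \<subseteq> {s. cinner x s = 0}"
    using assms by (intro vec.span_minimal) auto
  then show ?thesis by auto
qed

lemma cinner_tensor: "cinner (tensor u v) (tensor a b) = cinner u a * cinner v b"
proof -
  have "cinner (tensor u v) (tensor a b)
      = (\<Sum>(i, j)\<in>UNIV \<times> UNIV. (u $ i * cnj (a $ i)) * (v $ j * cnj (b $ j)))"
    by (simp add: cinner_def tensor_def UNIV_Times_UNIV split_def mult_ac)
  also have "\<dots> = cinner u a * cinner v b"
    by (simp add: cinner_def sum_product sum.cartesian_product)
  finally show ?thesis .
qed

lemma tensor_add_left: "tensor (a + b) c = tensor a c + tensor b c"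
  by (simp add: tensor_def vec_eq_iff distrib_right)

lemma tensor_add_right: "tensor c (a + b) = tensor c a + tensor c b"
  by (simp add: tensor_def vec_eq_iff distrib_left)

lemma tensor_scale_left: "tensor (c *s a) b = c *s tensor a b"
  by (simp add: tensor_def vec_eq_iff mult.assoc)

lemma cinner_tensor_axis: "cinner z (tensor (axis i 1) (axis j 1)) = z $ (i, j)"
proof -
  have "cinner z (tensor (axis i 1) (axis j 1)) = (\<Sum>p\<in>UNIV. if p = (i, j) then z $ p else 0)"
    unfolding cinner_def tensor_def by (intro sum.cong) (auto simp: axis_def)
  then show ?thesis by simp
qed

lemma tensor_orthogonal_tensor_subspace:
  assumes "(\<forall>a\<in>X. cinner u a = 0) \<or> (\<forall>b\<in>Y. cinner v b = 0)"
  shows "\<forall>w\<in>tensor_subspace X Y. cinner (tensor u v) w = 0"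
  unfolding tensor_subspace_def
  by (rule cinner_orthogonal_span) (use assms in \<open>auto simp: cinner_tensor\<close>)

lemma orthogonal_tensor_subspace_and_products_imp_zero:
  assumes X: "vec.subspace X" and Y: "vec.subspace Y"
    and z_P: "\<forall>w\<in>tensor_subspace X Y. cinner z w = 0"
    and z_products: "\<And>u v. \<forall>w\<in>tensor_subspace X Y. cinner (tensor u v) w = 0
                       \<Longrightarrow> cinner z (tensor u v) = 0"
  shows "z = 0"
proof -
  have "z $ (i, j) = 0" for i j
  proof -
    obtain a b where a: "a \<in> X" and b: "\<forall>s\<in>X. cinner b s = 0" and e_i: "axis i 1 = a + b"
      using vec_subspace_orthogonal_decomp[OF X] by metis
    obtain c d where c: "c \<in> Y" and d: "\<forall>s\<in>Y. cinner d s = 0" and e_j: "axis j 1 = c + d"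
      using vec_subspace_orthogonal_decomp[OF Y] by metis
    have "tensor a c \<in> tensor_subspace X Y"
      unfolding tensor_subspace_def using a c by (intro vec.span_base) blast
    then have "cinner z (tensor a c) = 0" using z_P by blast
    moreover have "cinner z (tensor a d) = 0" "cinner z (tensor b c) = 0" "cinner z (tensor b d) = 0"
      using b d by (auto intro!: z_products tensor_orthogonal_tensor_subspace)
    ultimately have "cinner z (tensor (axis i 1) (axis j 1)) = 0"
      unfolding e_i e_j by (simp add: tensor_add_left tensor_add_right cinner_add_right)
    then show ?thesis by (simp add: cinner_tensor_axis)
  qed
  then show ?thesis by (simp add: vec_eq_iff)
qed

lemma exists_orthogonal_product_vector:
  assumes X: "vec.subspace X" and Y: "vec.subspace Y" and w: "w \<notin> tensor_subspace X Y"
  shows "\<exists>u v. (\<forall>z\<in>tensor_subspace X Y. cinner (tensor u v) z = 0)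
           \<and> cinner w (tensor u v) \<noteq> 0"
proof -
  have "vec.subspace (tensor_subspace X Y)"
    unfolding tensor_subspace_def by (rule vec.subspace_span)
  then obtain p q where p: "p \<in> tensor_subspace X Y"
    and q: "\<forall>s\<in>tensor_subspace X Y. cinner q s = 0" and w_eq: "w = p + q"
    using vec_subspace_orthogonal_decomp by metis
  have "q \<noteq> 0" using w p w_eq by auto
  then obtain u v where uv: "\<forall>z\<in>tensor_subspace X Y. cinner (tensor u v) z = 0"
    and "cinner q (tensor u v) \<noteq> 0"
    using orthogonal_tensor_subspace_and_products_imp_zero[OF X Y q] by blast
  moreover have "cinner p (tensor u v) = 0"
    using uv p by (subst cinner_commute_cnj) simp
  ultimately show ?thesis
    unfolding w_eq by (intro exI[of _ u] exI[of _ v]) (simp add: cinner_add_left)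
qed

lemma norm_vector_smult: "norm (c *s (x::complex^'i)) = cmod c * norm x"
  unfolding norm_vec_def by (simp add: L2_set_right_distrib norm_mult)

lemma exists_unit_multiple_Re_cinner_pos:
  fixes x :: "complex^'i"
  assumes "cinner w x \<noteq> 0"
  shows "\<exists>c. norm (c *s x) = 1 \<and> Re (cinner w (c *s x)) > 0"
proof -
  define r where "r = cmod (cinner w x) * norm x"
  have "x \<noteq> 0" using assms by auto
  then have r: "r > 0" using assms by (simp add: r_def)
  define c where "c = cinner w x / complex_of_real r"
  have "norm (c *s x) = 1"
    using assms r \<open>x \<noteq> 0\<close> by (simp add: c_def norm_vector_smult norm_divide norm_mult r_def)
  moreover have "cinner w (c *s x) = cinner w x * cnj (cinner w x) / complex_of_real r"
    by (simp add: c_def cinner_scale_right mult.commute)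
  then have "cinner w (c *s x) = complex_of_real ((cmod (cinner w x))\<^sup>2 / r)"
    unfolding complex_norm_square[symmetric] by simp
  ultimately show ?thesis
    using assms r by (intro exI[of _ c]) simp
qed

lemma exists_small_rotation_increasing:
  fixes a \<beta> :: real
  assumes "\<beta> > 0"
  shows "\<exists>s. 0 < s \<and> s < 1 \<and> s\<^sup>2 * a + (sqrt (1 - s\<^sup>2))\<^sup>2 + 2 * s * sqrt (1 - s\<^sup>2) * \<beta> > 1"
proof -
  define s where "s = min (1/2) (\<beta> / (1 + \<bar>1 - a\<bar>))"
  define t where "t = sqrt (1 - s\<^sup>2)"
  have D: "1 + \<bar>1 - a\<bar> > 0" by (simp add: add_pos_nonneg)
  have s_pos: "s > 0" using assms D by (simp add: s_def)
  have s_le: "s \<le> 1/2" unfolding s_def by (rule min.cobounded1)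
  have "s \<le> \<beta> / (1 + \<bar>1 - a\<bar>)" by (simp add: s_def)
  then have s_\<beta>: "s * (1 + \<bar>1 - a\<bar>) \<le> \<beta>" using D by (simp add: pos_le_divide_eq)
  have "s\<^sup>2 \<le> (1/2)\<^sup>2" using s_pos s_le by (intro power_mono) auto
  then have quarter: "(1/2)\<^sup>2 \<le> 1 - s\<^sup>2" by (simp add: power_divide)
  then have "1/2 \<le> t" unfolding t_def by (rule real_le_rsqrt)
  have "0 \<le> 1 - s\<^sup>2" using quarter zero_le_power2 order_trans by blast
  then have t2: "t\<^sup>2 = 1 - s\<^sup>2" by (simp add: t_def)
  have "s * (1 - a) < s * (1 + \<bar>1 - a\<bar>)" using s_pos by (intro mult_strict_left_mono) auto
  also have "\<dots> \<le> \<beta> * 1" using s_\<beta> by simp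
  also have "\<dots> \<le> \<beta> * (2 * t)" using \<open>1/2 \<le> t\<close> assms by (intro mult_left_mono) auto
  also have "\<dots> = 2 * t * \<beta>" by simp
  finally have "0 < s * (2 * t * \<beta> - s * (1 - a))" using s_pos by simp
  also have "\<dots> = s\<^sup>2 * a + t\<^sup>2 + 2 * s * t * \<beta> - 1"
    using t2 by (simp add: power2_eq_square algebra_simps)
  finally show ?thesis
    using s_pos s_le unfolding t_def by (intro exI[of _ s]) auto
qed

theorem lemma5:
  fixes A :: "complex^('m::finite \<times> 'n::finite)^('m \<times> 'n)"
    and xs :: "nat \<Rightarrow> complex^'m" and ys :: "nat \<Rightarrow> complex^'n" and k :: nat
    and y :: "complex^('m \<times> 'n)"
  assumes "self_adjoint A"
    and "y = (\<Sum>i<k. tensor (xs i) (ys i))"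
    and "cinner (A *v y) y = 1"
    and "A *v y \<notin> tensor_subspace (vec.span (xs ` {..<k})) (vec.span (ys ` {..<k}))"
  shows "\<exists>u v s. norm (tensor u v) = 1
           \<and> (\<forall>z \<in> tensor_subspace (vec.span (xs ` {..<k})) (vec.span (ys ` {..<k})).
                 cinner (tensor u v) z = 0)
           \<and> 0 < s \<and> s < 1
           \<and> (let t = sqrt (1 - s\<^sup>2); w = s *\<^sub>R tensor u v + t *\<^sub>R y
              in Re (cinner (A *v w) w) > 1)"
proof -
  let ?P = "tensor_subspace (vec.span (xs ` {..<k})) (vec.span (ys ` {..<k}))"
  obtain u0 v where orth_u0v: "\<forall>z\<in>?P. cinner (tensor u0 v) z = 0"
    and "cinner (A *v y) (tensor u0 v) \<noteq> 0"
    using exists_orthogonal_product_vector[OF vec.subspace_span vec.subspace_span assms(4)]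
    by blast
  then obtain c where unit: "norm (c *s tensor u0 v) = 1"
    and \<beta>_pos: "Re (cinner (A *v y) (c *s tensor u0 v)) > 0"
    using exists_unit_multiple_Re_cinner_pos by blast
  define x where "x = tensor (c *s u0) v"
  have x: "x = c *s tensor u0 v" by (simp add: x_def tensor_scale_left)
  have orth_x: "\<forall>z\<in>?P. cinner x z = 0"
    using orth_u0v by (simp add: x cinner_scale_left)
  obtain s where s: "0 < s" "s < 1" and
    "s\<^sup>2 * Re (cinner (A *v x) x) + (sqrt (1 - s\<^sup>2))\<^sup>2
      + 2 * s * sqrt (1 - s\<^sup>2) * Re (cinner (A *v y) x) > 1"
    using exists_small_rotation_increasing \<beta>_pos unfolding x by blast
  then have "Re (cinner (A *v (s *\<^sub>R x + sqrt (1 - s\<^sup>2) *\<^sub>R y))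
                       (s *\<^sub>R x + sqrt (1 - s\<^sup>2) *\<^sub>R y)) > 1"
    by (simp add: self_adjoint_Re_cinner_combination[OF assms(1)] assms(3))
  moreover have "norm x = 1" using unit by (simp add: x)
  ultimately show ?thesis
    using orth_x s unfolding x_def Let_def by blast
qed

end
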